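(* Let $\Gamma$ be a finite $R$-thick vertex-transitive digraph with no loop. Then: (a) $\Gamma\cong\Sigma[\overline{\mathrm{K}}_b]$ for some digraph $\Sigma$ and some integer $b\geqslant 2$; (b) if $\Gamma$ is a normal Cayley digraph, then $\Gamma$ has order at most $4$; (c) if $\Gamma$ is a normal circulant with nonempty arc set, then $\Gamma\cong\mathrm{C}_4$.
   Context: A digraph is a pair $(V,A)$ with $A\subseteq V\times V$; a loop is an arc $(v,v)$; the order is $|V|$. For $v\in V$, $\Gamma^+(v)=\{w:(v,w)\in A\}$ and $\Gamma^-(v)=\{u:(u,v)\in A\}$. $\Gamma$ is $R$-thick if there are distinct vertices $u,v$ with $\Gamma^+(u)=\Gamma^+(v)$ and $\Gamma^-(u)=\Gamma^-(v)$. $\overline{\mathrm{K}}_b$ has $b$ vertices and no arcs; $\mathrm{C}_4$ is the undirected $4$-cycle viewed as a digraph. Lexicographic product $\Sigma[\Delta]$: vertex set $V(\Sigma)\times V(\Delta)$, $(u_1,u_2)\to(v_1,v_2)$ iff $u_1\to v_1$ in $\Sigma$, or $u_1=v_1$ and $u_2\to v_2$ in $\Delta$. The Cayley digraph $\mathrm{Cay}(G,S)$ ($S\subseteq G$ nonempty) has vertex set $G$ and $x\to y$ iff $yx^{-1}\in S$; it is normal if the group $\widehat G$ of right multiplications $x\mapsto xg$ is normal in its automorphism group; $\Gamma$ is a normal Cayley digraph if it is isomorphic to a normal Cayley digraph of some group. $\Gamma$ is a normal circulant if $\mathrm{Aut}(\Gamma)$ has a cyclic subgroup regular on $V$ and normal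 in $\mathrm{Aut}(\Gamma)$. *)

theory Defs
  imports "HOL-Algebra.Algebra"
begin

type_synonym 'a digraph = "'a set \<times> ('a \<times> 'a) set"

definition verts :: "'a digraph \<Rightarrow> 'a set" where "verts G = fst G"
definition arcs :: "'a digraph \<Rightarrow> ('a \<times> 'a) set" where "arcs G = snd G"

definition is_digraph :: "'a digraph \<Rightarrow> bool" where
  "is_digraph G \<longleftrightarrow> arcs G \<subseteq> verts G \<times> verts G"

definition loopless :: "'a digraph \<Rightarrow> bool" where
  "loopless G \<longleftrightarrow> (\<forall>v. (v, v) \<notin> arcs G)"

definition out_nbrs :: "'a digraph \<Rightarrow> 'a \<Rightarrow> 'a set" where
  "out_nbrs G v = {w. (v, w) \<in> arcs G}"

definition in_nbrs :: "'a digraph \<Rightarrow> 'a \<Rightarrow> 'a set" where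
  "in_nbrs G v = {u. (u, v) \<in> arcs G}"

definition R_thick :: "'a digraph \<Rightarrow> bool" where
  "R_thick G \<longleftrightarrow> (\<exists>u \<in> verts G. \<exists>v \<in> verts G. u \<noteq> v \<and>
      out_nbrs G u = out_nbrs G v \<and> in_nbrs G u = in_nbrs G v)"

definition digraph_iso :: "'a digraph \<Rightarrow> 'b digraph \<Rightarrow> bool" (infix "\<cong>\<^sub>d" 50) where
  "G \<cong>\<^sub>d H \<longleftrightarrow> (\<exists>f. bij_betw f (verts G) (verts H) \<and>
      (\<forall>u \<in> verts G. \<forall>v \<in> verts G. (u, v) \<in> arcs G \<longleftrightarrow> (f u, f v) \<in> arcs H))"

definition auts :: "'a digraph \<Rightarrow> ('a \<Rightarrow> 'a) set" where
  "auts G = {f \<in> Bij (verts G).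
      \<forall>u \<in> verts G. \<forall>v \<in> verts G. (u, v) \<in> arcs G \<longleftrightarrow> (f u, f v) \<in> arcs G}"

definition Aut :: "'a digraph \<Rightarrow> ('a \<Rightarrow> 'a) monoid" where
  "Aut G = (BijGroup (verts G)) \<lparr>carrier := auts G\<rparr>"

definition vertex_transitive :: "'a digraph \<Rightarrow> bool" where
  "vertex_transitive G \<longleftrightarrow> (\<forall>u \<in> verts G. \<forall>v \<in> verts G. \<exists>f \<in> auts G. f u = v)"

definition empty_digraph :: "nat \<Rightarrow> nat digraph" where
  "empty_digraph b = ({0..<b}, {})"

definition lexicographic_product :: "'a digraph \<Rightarrow> 'b digraph \<Rightarrow> ('a \<times> 'b) digraph" where
  "lexicographic_product S D = (verts S \<times> verts D,
     {((u1, u2), (v1, v2)). u1 \<in> verts S \<and> v1 \<in> verts S \<and> u2 \<in> verts D \<and> v2 \<in> verts D \<and>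
        ((u1, v1) \<in> arcs S \<or> (u1 = v1 \<and> (u2, v2) \<in> arcs D))})"

definition C4 :: "nat digraph" where
  "C4 = ({0..<4}, {(i, j). i < 4 \<and> j < 4 \<and> (j = (i + 1) mod 4 \<or> i = (j + 1) mod 4)})"

definition Cay :: "('g, 'b) monoid_scheme \<Rightarrow> 'g set \<Rightarrow> 'g digraph" where
  "Cay G S = (carrier G,
     {(x, y). x \<in> carrier G \<and> y \<in> carrier G \<and> y \<otimes>\<^bsub>G\<^esub> inv\<^bsub>G\<^esub> x \<in> S})"

definition right_mult :: "('g, 'b) monoid_scheme \<Rightarrow> 'g \<Rightarrow> ('g \<Rightarrow> 'g)" where
  "right_mult G g = (\<lambda>x \<in> carrier G. x \<otimes>\<^bsub>G\<^esub> g)"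

definition normal_Cay :: "('g, 'b) monoid_scheme \<Rightarrow> 'g set \<Rightarrow> bool" where
  "normal_Cay G S \<longleftrightarrow> group G \<and> S \<subseteq> carrier G \<and> S \<noteq> {} \<and>
     (right_mult G ` carrier G) \<lhd> Aut (Cay G S)"

definition normal_circulant :: "'a digraph \<Rightarrow> bool" where
  "normal_circulant G \<longleftrightarrow> (\<exists>H. H \<lhd> Aut G \<and> cyclic_group (subgroup_generated (Aut G) H) \<and>
      (\<forall>u \<in> verts G. \<forall>v \<in> verts G. \<exists>!h \<in> H. h u = v))"

end

theory Submission
  imports Defs
begin

text \<open>Twinship is an
equivalence relation preserved by automorphisms, so in a vertex-transitive digraph all twin classes
have the same size \<open>b\<close>, which is at least 2 when the digraph is R-thick; indexing every class by
\<open>{0..<b}\<close> exhibits \<open>\<Gamma>\<close> as \<open>\<Sigma>[K\<^sub>b]\<close>, with \<open>\<Sigma>\<close> induced on a set of class representatives.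

The transposition of two twins \<open>u, v\<close> is an automorphism. If \<open>H\<close> is a regular normal subgroup of
the automorphism group (the right regular representation of a normal Cayley digraph, or the cyclic
group of a normal circulant), conjugation by this transposition maps \<open>H\<close> to itself. For a third
vertex \<open>w\<close> it then carries the element of \<open>H\<close> taking \<open>w\<close> to \<open>u\<close> onto the one taking \<open>w\<close> to \<open>v\<close>,
and regularity forces the former to send every vertex outside \<open>{u, v, w}\<close> to \<open>v\<close>; so there are at
most four vertices. A loopless vertex-transitive digraph on at most four vertices with twins and
an arc consists of two twin pairs joined in both directions, which is \<open>C\<^sub>4\<close>.\<close>

definition twins :: "'a digraph \<Rightarrow> 'a \<Rightarrow> 'a \<Rightarrow> bool" where
  "twins D x y \<longleftrightarrow> x \<in> verts D \<and> y \<in> verts D \<and>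
     (\<forall>z\<in>verts D. ((x, z) \<in> arcs D \<longleftrightarrow> (y, z) \<in> arcs D) \<and> ((z, x) \<in> arcs D \<longleftrightarrow> (z, y) \<in> arcs D))"

definition twin_class :: "'a digraph \<Rightarrow> 'a \<Rightarrow> 'a set" where
  "twin_class D x = {y. twins D x y}"

lemma twins_refl: "x \<in> verts D \<Longrightarrow> twins D x x"
  by (simp add: twins_def)

lemma twins_sym: "twins D x y \<Longrightarrow> twins D y x"
  by (simp add: twins_def)

lemma twins_trans: "twins D x y \<Longrightarrow> twins D y z \<Longrightarrow> twins D x z"
  by (simp add: twins_def)

lemma twins_imp_verts: "twins D x y \<Longrightarrow> x \<in> verts D \<and> y \<in> verts D"
  by (simp add: twins_def)

lemma twins_out_arc_iff: "twins D x y \<Longrightarrow> z \<in> verts D \<Longrightarrow> (x, z) \<in> arcs D \<longleftrightarrow> (y, z) \<in> arcs D"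
  by (simp add: twins_def)

lemma twins_in_arc_iff: "twins D x y \<Longrightarrow> z \<in> verts D \<Longrightarrow> (z, x) \<in> arcs D \<longleftrightarrow> (z, y) \<in> arcs D"
  by (simp add: twins_def)

lemma twins_not_arc: "loopless D \<Longrightarrow> twins D x y \<Longrightarrow> (x, y) \<notin> arcs D"
  by (simp add: twins_def loopless_def)

lemma twins_arcs_between_classes:
  assumes pp': "twins D p p'" and qq': "twins D q q'"
    and "(a, b) \<in> arcs D" and "a \<in> {p, p'}" and "b \<in> {q, q'}"
    and "x \<in> {p, p'}" and "y \<in> {q, q'}"
  shows "(x, y) \<in> arcs D"
  using assms twins_imp_verts[OF pp'] twins_imp_verts[OF qq']
    twins_out_arc_iff[OF pp'] twins_in_arc_iff[OF qq'] by blast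

lemma R_thick_obtains_twins:
  assumes "R_thick D"
  obtains u v where "twins D u v" "u \<noteq> v"
  using assms by (auto simp: R_thick_def twins_def out_nbrs_def in_nbrs_def set_eq_iff)

lemma twin_class_subset: "twin_class D x \<subseteq> verts D"
  by (auto simp: twin_class_def dest: twins_imp_verts)

lemma twin_class_eq: "twins D x y \<Longrightarrow> twin_class D x = twin_class D y"
  unfolding twin_class_def by (blast intro: twins_sym twins_trans)

lemma auts_bij_betw: "f \<in> auts D \<Longrightarrow> bij_betw f (verts D) (verts D)"
  by (simp add: auts_def Bij_def)

lemma auts_arc_iff:
  "f \<in> auts D \<Longrightarrow> x \<in> verts D \<Longrightarrow> y \<in> verts D \<Longrightarrow> (x, y) \<in> arcs D \<longleftrightarrow> (f x, f y) \<in> arcs D"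
  by (simp add: auts_def)

lemma twins_image:
  assumes bij: "bij_betw f (verts \<Gamma>) (verts D)"
    and arcs: "\<forall>x\<in>verts \<Gamma>. \<forall>y\<in>verts \<Gamma>. (x, y) \<in> arcs \<Gamma> \<longleftrightarrow> (f x, f y) \<in> arcs D"
    and "twins \<Gamma> x y"
  shows "twins D (f x) (f y)"
proof -
  have xy: "x \<in> verts \<Gamma>" "y \<in> verts \<Gamma>"
    using twins_imp_verts[OF \<open>twins \<Gamma> x y\<close>] by auto
  have "\<forall>z\<in>f ` verts \<Gamma>. ((f x, z) \<in> arcs D \<longleftrightarrow> (f y, z) \<in> arcs D) \<and>
      ((z, f x) \<in> arcs D \<longleftrightarrow> (z, f y) \<in> arcs D)"
    using xy \<open>twins \<Gamma> x y\<close> arcs by (simp add: twins_def)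
  moreover have "f ` verts \<Gamma> = verts D"
    using bij by (simp add: bij_betw_def)
  ultimately show ?thesis
    using xy by (auto simp: twins_def)
qed

lemma twins_auts_image:
  assumes "f \<in> auts D" and "twins D x y"
  shows "twins D (f x) (f y)"
  using twins_image[OF auts_bij_betw[OF assms(1)] _ assms(2)] assms(1) by (simp add: auts_def)

lemma digraph_iso_twins:
  assumes "\<Gamma> \<cong>\<^sub>d D" and "twins \<Gamma> u v" and "u \<noteq> v"
  obtains u' v' where "twins D u' v'" and "u' \<noteq> v'"
proof -
  obtain f where bij: "bij_betw f (verts \<Gamma>) (verts D)"
    and arcs: "\<forall>x\<in>verts \<Gamma>. \<forall>y\<in>verts \<Gamma>. (x, y) \<in> arcs \<Gamma> \<longleftrightarrow> (f x, f y) \<in> arcs D"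
    using assms(1) by (auto simp: digraph_iso_def)
  have "f u \<noteq> f v"
    using bij_betw_imp_inj_on[OF bij] twins_imp_verts[OF assms(2)] \<open>u \<noteq> v\<close> by (auto dest: inj_onD)
  with twins_image[OF bij arcs assms(2)] show ?thesis using that by blast
qed

lemma digraph_iso_card: "\<Gamma> \<cong>\<^sub>d D \<Longrightarrow> card (verts \<Gamma>) = card (verts D)"
  unfolding digraph_iso_def using bij_betw_same_card by blast

lemma twins_transpose:
  assumes "twins D u v" and "x \<in> verts D"
  shows "twins D x (transpose u v x)"
  using assms twins_sym[OF assms(1)] twins_refl[OF assms(2)] by (cases "x = u \<or> x = v") auto

lemma restrict_transpose_in_auts:
  assumes uv: "twins D u v"
  shows "restrict (transpose u v) (verts D) \<in> auts D"
proof -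
  have "bij_betw (transpose u v) (verts D) (verts D)"
    using twins_imp_verts[OF uv] by simp
  moreover have "(x, y) \<in> arcs D \<longleftrightarrow> (transpose u v x, transpose u v y) \<in> arcs D"
    if "x \<in> verts D" "y \<in> verts D" for x y
  proof -
    have "transpose u v x \<in> verts D"
      using twins_imp_verts[OF twins_transpose[OF uv \<open>x \<in> verts D\<close>]] by blast
    then show ?thesis
      using that twins_out_arc_iff[OF twins_transpose[OF uv \<open>x \<in> verts D\<close>]]
        twins_in_arc_iff[OF twins_transpose[OF uv \<open>y \<in> verts D\<close>]] by blast
  qed
  ultimately show ?thesis
    by (simp add: auts_def Bij_def)
qed

lemma vertex_transitive_ex_twin:
  assumes "vertex_transitive D" and "twins D u v" and "u \<noteq> v" and "x \<in> verts D"
  shows "\<exists>x'. x' \<noteq> x \<and> twins D x x'"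
proof -
  have u: "u \<in> verts D" and v: "v \<in> verts D"
    using twins_imp_verts[OF \<open>twins D u v\<close>] by auto
  obtain f where f: "f \<in> auts D" "f u = x"
    using assms(1,4) u by (auto simp: vertex_transitive_def)
  have "f v \<noteq> x"
    using bij_betw_imp_inj_on[OF auts_bij_betw[OF f(1)]] f(2) u v \<open>u \<noteq> v\<close> by (auto dest: inj_onD)
  then show ?thesis
    using twins_auts_image[OF f(1) \<open>twins D u v\<close>] f(2) by auto
qed

lemma card_twin_class_le:
  assumes "vertex_transitive D" and "finite (verts D)" and "x \<in> verts D" and "y \<in> verts D"
  shows "card (twin_class D x) \<le> card (twin_class D y)"
proof -
  obtain f where f: "f \<in> auts D" "f x = y"
    using assms by (auto simp: vertex_transitive_def)
  note twin_class_subset[of D x] twin_class_subset[of D y]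
  moreover have "f ` twin_class D x \<subseteq> twin_class D y"
    using twins_auts_image[OF f(1)] f(2) by (auto simp: twin_class_def)
  moreover have "inj_on f (verts D)"
    using auts_bij_betw[OF f(1)] by (simp add: bij_betw_def)
  ultimately show ?thesis
    using \<open>finite (verts D)\<close> by (meson card_inj_on_le inj_on_subset rev_finite_subset)
qed

lemma card_twin_class_eq:
  assumes "vertex_transitive D" and "finite (verts D)" and "x \<in> verts D" and "y \<in> verts D"
  shows "card (twin_class D x) = card (twin_class D y)"
  using card_twin_class_le[OF assms] card_twin_class_le[OF assms(1,2,4,3)] by simp

lemma ex_index_on_classes:
  fixes C :: "'a \<Rightarrow> 'a set"
  assumes fin: "\<And>x. x \<in> V \<Longrightarrow> finite (C x)" and card: "\<And>x. x \<in> V \<Longrightarrow> card (C x) = b"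
    and closed: "\<And>x y. x \<in> V \<Longrightarrow> y \<in> C x \<Longrightarrow> C y = C x"
  obtains idx where "\<And>x. x \<in> V \<Longrightarrow> bij_betw idx (C x) {0..<b}"
proof
  define g where "g x = (SOME g. bij_betw g (C x) {0..<b})" for x
  fix x assume x: "x \<in> V"
  have "\<exists>h. bij_betw h (C x) {0..<b}"
    using ex_bij_betw_finite_nat[OF fin[OF x]] card[OF x] by simp
  then have "bij_betw (g x) (C x) {0..<b}"
    unfolding g_def by (rule someI_ex)
  moreover have "g x y = g y y" if "y \<in> C x" for y
    using closed[OF x that] by (simp add: g_def)
  ultimately show "bij_betw (\<lambda>y. g y y) (C x) {0..<b}"
    using bij_betw_cong[of "C x" "g x" "\<lambda>y. g y y"] by simp
qed

lemma verts_lexicographic_product_empty_digraph: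
  "verts (lexicographic_product S (empty_digraph b)) = verts S \<times> {0..<b}"
  by (simp add: lexicographic_product_def empty_digraph_def verts_def)

lemma arcs_lexicographic_product_empty_digraph:
  "((r, i), (s, j)) \<in> arcs (lexicographic_product S (empty_digraph b)) \<longleftrightarrow>
     (r, s) \<in> arcs S \<and> r \<in> verts S \<and> s \<in> verts S \<and> i < b \<and> j < b"
  by (auto simp: lexicographic_product_def empty_digraph_def verts_def arcs_def)

lemma twin_class_representative:
  obtains rep where "\<And>x. x \<in> verts D \<Longrightarrow> twins D x (rep x)" and "\<And>x y. twins D x y \<Longrightarrow> rep x = rep y"
proof
  define rep where "rep x = (SOME y. y \<in> twin_class D x)" for x
  show "twins D x (rep x)" if "x \<in> verts D" for x
    using someI[of "\<lambda>y. y \<in> twin_class D x" x] twins_refl[OF that]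
    by (simp add: rep_def twin_class_def)
  show "rep x = rep y" if "twins D x y" for x y
    using twin_class_eq[OF that] by (simp add: rep_def)
qed

lemma index_less:
  fixes idx :: "'a \<Rightarrow> nat"
  assumes "bij_betw idx (twin_class D x) {0..<b}" and "x \<in> verts D"
  shows "idx x < b"
  using bij_betwE[OF assms(1)] twins_refl[OF assms(2)] by (simp add: twin_class_def)

lemma bij_betw_twin_class_coordinates:
  fixes idx :: "'a \<Rightarrow> nat"
  assumes rep_twins: "\<And>x. x \<in> verts D \<Longrightarrow> twins D x (rep x)"
    and rep_eq: "\<And>x y. twins D x y \<Longrightarrow> rep x = rep y"
    and idx: "\<And>x. x \<in> verts D \<Longrightarrow> bij_betw idx (twin_class D x) {0..<b}"
  shows "bij_betw (\<lambda>x. (rep x, idx x)) (verts D) (rep ` verts D \<times> {0..<b})"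
proof (rule bij_betw_imageI)
  show "inj_on (\<lambda>x. (rep x, idx x)) (verts D)"
  proof (rule inj_onI)
    fix x y assume x: "x \<in> verts D" and y: "y \<in> verts D" and "(rep x, idx x) = (rep y, idx y)"
    then have "rep x = rep y" and "idx x = idx y"
      by simp_all
    then have "twins D x y"
      using rep_twins[OF x] rep_twins[OF y] by (metis twins_sym twins_trans)
    then show "x = y"
      using inj_onD[OF bij_betw_imp_inj_on[OF idx[OF x]] \<open>idx x = idx y\<close>] twins_refl[OF x]
      by (simp add: twin_class_def)
  qed
  show "(\<lambda>x. (rep x, idx x)) ` verts D = rep ` verts D \<times> {0..<b}"
  proof (intro equalityI subsetI)
    fix z assume "z \<in> (\<lambda>x. (rep x, idx x)) ` verts D"
    then show "z \<in> rep ` verts D \<times> {0..<b}"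
      using index_less[OF idx] by auto
  next
    fix z assume "z \<in> rep ` verts D \<times> {0..<b}"
    then obtain w i where z: "z = (rep w, i)" and w: "w \<in> verts D" and "i < b" by auto
    then have "i \<in> idx ` twin_class D w"
      using bij_betw_imp_surj_on[OF idx[OF w]] by simp
    then obtain x where "twins D w x" and "idx x = i"
      by (auto simp: twin_class_def)
    then have "(rep x, idx x) = z" and "x \<in> verts D"
      using rep_eq z twins_imp_verts[of D w x] by auto
    then show "z \<in> (\<lambda>x. (rep x, idx x)) ` verts D" by blast
  qed
qed

lemma iso_lexicographic_product_empty_digraph:
  fixes \<Gamma> :: "'a digraph"
  assumes fin: "finite (verts \<Gamma>)" and card: "\<And>x. x \<in> verts \<Gamma> \<Longrightarrow> card (twin_class \<Gamma> x) = b"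
  shows "\<exists>\<Sigma> :: 'a digraph. is_digraph \<Sigma> \<and> \<Gamma> \<cong>\<^sub>d lexicographic_product \<Sigma> (empty_digraph b)"
proof -
  let ?V = "verts \<Gamma>" and ?A = "arcs \<Gamma>"
  have "finite (twin_class \<Gamma> x)" for x
    using twin_class_subset fin by (rule finite_subset)
  moreover have "twin_class \<Gamma> y = twin_class \<Gamma> x" if "y \<in> twin_class \<Gamma> x" for x y
    using that twin_class_eq[of \<Gamma> x y] by (simp add: twin_class_def)
  ultimately obtain idx where idx: "\<And>x. x \<in> ?V \<Longrightarrow> bij_betw idx (twin_class \<Gamma> x) {0..<b}"
    using ex_index_on_classes[of ?V "twin_class \<Gamma>" b] card by blast
  obtain rep where rep_twins: "\<And>x. x \<in> ?V \<Longrightarrow> twins \<Gamma> x (rep x)"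
    and rep_eq: "\<And>x y. twins \<Gamma> x y \<Longrightarrow> rep x = rep y"
    using twin_class_representative[of \<Gamma>] by blast
  have arc_rep: "(x, y) \<in> ?A \<longleftrightarrow> (rep x, rep y) \<in> ?A" if "x \<in> ?V" "y \<in> ?V" for x y
  proof -
    have "rep x \<in> ?V"
      using twins_imp_verts[OF rep_twins[OF that(1)]] by blast
    then show ?thesis
      using twins_out_arc_iff[OF rep_twins[OF that(1)] that(2)]
        twins_in_arc_iff[OF rep_twins[OF that(2)]] by blast
  qed
  define \<Sigma> :: "'a digraph" where "\<Sigma> = (rep ` ?V, ?A \<inter> rep ` ?V \<times> rep ` ?V)"
  have verts_\<Sigma>: "verts \<Sigma> = rep ` ?V" and arcs_\<Sigma>: "arcs \<Sigma> = ?A \<inter> rep ` ?V \<times> rep ` ?V"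
    by (simp_all add: \<Sigma>_def verts_def arcs_def)
  have "(x, y) \<in> ?A \<longleftrightarrow>
      ((rep x, idx x), (rep y, idx y)) \<in> arcs (lexicographic_product \<Sigma> (empty_digraph b))"
    if "x \<in> ?V" "y \<in> ?V" for x y
    using that arc_rep index_less[OF idx]
    by (simp add: arcs_lexicographic_product_empty_digraph verts_\<Sigma> arcs_\<Sigma>)
  then have "\<Gamma> \<cong>\<^sub>d lexicographic_product \<Sigma> (empty_digraph b)"
    using bij_betw_twin_class_coordinates[OF rep_twins rep_eq idx]
    unfolding digraph_iso_def verts_lexicographic_product_empty_digraph verts_\<Sigma> by blast
  moreover have "is_digraph \<Sigma>"
    by (auto simp: is_digraph_def verts_\<Sigma> arcs_\<Sigma>)
  ultimately show ?thesis by blast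
qed

lemma vertex_transitive_twins_iso_lexicographic_product:
  fixes \<Gamma> :: "'a digraph"
  assumes fin: "finite (verts \<Gamma>)" and vt: "vertex_transitive \<Gamma>" and uv: "twins \<Gamma> u v" "u \<noteq> v"
  shows "\<exists>(\<Sigma> :: 'a digraph) b. is_digraph \<Sigma> \<and> b \<ge> 2 \<and> \<Gamma> \<cong>\<^sub>d lexicographic_product \<Sigma> (empty_digraph b)"
proof -
  have u: "u \<in> verts \<Gamma>"
    using twins_imp_verts[OF uv(1)] by blast
  have "{u, v} \<subseteq> twin_class \<Gamma> u"
    using twins_refl[OF u] uv(1) by (simp add: twin_class_def)
  then have "card {u, v} \<le> card (twin_class \<Gamma> u)"
    by (rule card_mono[OF finite_subset[OF twin_class_subset fin]])
  then have "2 \<le> card (twin_class \<Gamma> u)"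
    using uv(2) by simp
  moreover obtain \<Sigma> :: "'a digraph"
    where "is_digraph \<Sigma>" "\<Gamma> \<cong>\<^sub>d lexicographic_product \<Sigma> (empty_digraph (card (twin_class \<Gamma> u)))"
    using iso_lexicographic_product_empty_digraph[OF fin card_twin_class_eq[OF vt fin _ u]] by blast
  ultimately show ?thesis by blast
qed

context
  fixes V :: "'a set" and H :: "('a \<Rightarrow> 'a) set" and u v :: 'a
  assumes u: "u \<in> V" and v: "v \<in> V" and "u \<noteq> v"
    and bij: "\<And>h. h \<in> H \<Longrightarrow> bij_betw h V V"
    and regular: "\<And>x y. x \<in> V \<Longrightarrow> y \<in> V \<Longrightarrow> \<exists>!h\<in>H. h x = y"
    and normalized: "\<And>h. h \<in> H \<Longrightarrow> \<exists>h'\<in>H. \<forall>y\<in>V. h' (transpose u v y) = transpose u v (h y)"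
begin

lemma regular_normalized_by_transpose_image:
  assumes w: "w \<in> V" "w \<noteq> u" "w \<noteq> v" and hu: "hu \<in> H" "hu w = u"
  shows "hu ` (V - {u, v, w}) \<subseteq> {v}"
proof -
  obtain hv where hv: "hv \<in> H" "hv w = v" using regular[OF w(1) v] by blast
  obtain h' where h': "h' \<in> H" "\<forall>y\<in>V. h' (transpose u v y) = transpose u v (hu y)"
    using normalized[OF hu(1)] by blast
  have "h' w = v"
    using h'(2) w hu(2) by force
  then have "h' = hv"
    using regular[OF w(1) v] h'(1) hv by blast
  then have conj: "hv y = transpose u v (hu y)" if "y \<in> V - {u, v}" for y
    using h'(2)[rule_format, of y] that by simp
  have "hu x = v" if x: "x \<in> V - {u, v, w}" for x
  proof (rule ccontr)
    assume "hu x \<noteq> v"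
    moreover have "hu x \<noteq> u"
      using inj_onD[OF bij_betw_imp_inj_on[OF bij[OF hu(1)]]] x w(1) hu(2) by force
    moreover have "hu x \<in> V"
      using bij_betwE[OF bij[OF hu(1)]] x by blast
    ultimately have "hv x = hu x"
      using conj x by simp
    then have "hv = hu"
      using regular[OF _ \<open>hu x \<in> V\<close>, of x] x hu(1) hv(1) by blast
    then show False
      using hu(2) hv(2) \<open>u \<noteq> v\<close> by simp
  qed
  then show ?thesis by blast
qed

lemma card_le_4_if_regular_normalized_by_transpose: "card V \<le> 4"
proof (cases "V \<subseteq> {u, v}")
  case True
  then have "card V \<le> card {u, v}" by (simp add: card_mono)
  also have "\<dots> \<le> 2" by (simp add: card_insert_if)
  finally show ?thesis by simp
next
  case False
  then obtain w where w: "w \<in> V" "w \<noteq> u" "w \<noteq> v" by auto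
  obtain hu where hu: "hu \<in> H" "hu w = u" using regular[OF w(1) u] by blast
  have rest: "card (V - {u, v, w}) \<le> card {v}"
    using card_inj_on_le[OF inj_on_subset[OF bij_betw_imp_inj_on[OF bij[OF hu(1)]] Diff_subset]
        regular_normalized_by_transpose_image[OF w hu]] by simp
  have "V = {u, v, w} \<union> (V - {u, v, w})"
    using u v w(1) by blast
  then have "card V \<le> card {u, v, w} + card (V - {u, v, w})"
    by (metis card_Un_le)
  also have "\<dots> \<le> 3 + 1"
    using rest by (intro add_mono) (simp_all add: card_insert_if)
  finally show ?thesis by simp
qed

end

lemma Aut_mult: "f \<in> auts D \<Longrightarrow> g \<in> auts D \<Longrightarrow> f \<otimes>\<^bsub>Aut D\<^esub> g = compose (verts D) f g"
  by (simp add: Aut_def BijGroup_def auts_def)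

lemma normal_subgroup_Aut_conjugate:
  assumes N: "H \<lhd> Aut D" and f: "f \<in> auts D" and h: "h \<in> H"
  shows "\<exists>h'\<in>H. \<forall>y\<in>verts D. h' (f y) = f (h y)"
proof -
  interpret N: normal H "Aut D" by (rule N)
  have carrier: "carrier (Aut D) = auts D"
    by (simp add: Aut_def)
  have h_aut: "h \<in> auts D"
    using N.subset h carrier by blast
  define h' where "h' = f \<otimes>\<^bsub>Aut D\<^esub> h \<otimes>\<^bsub>Aut D\<^esub> inv\<^bsub>Aut D\<^esub> f"
  have "h' \<in> H"
    unfolding h'_def using N.inv_op_closed2 f h carrier by simp
  moreover have "h' \<otimes>\<^bsub>Aut D\<^esub> f = f \<otimes>\<^bsub>Aut D\<^esub> h"
  proof -
    have "f \<in> carrier (Aut D)" "h \<in> carrier (Aut D)"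
      using f h_aut carrier by auto
    then show ?thesis
      unfolding h'_def by (simp add: N.m_assoc)
  qed
  moreover have "h' \<in> auts D"
    using N.subset \<open>h' \<in> H\<close> carrier by blast
  ultimately have "compose (verts D) h' f = compose (verts D) f h"
    using f h_aut by (simp add: Aut_mult)
  then have "\<forall>y\<in>verts D. h' (f y) = f (h y)"
    by (metis compose_eq)
  with \<open>h' \<in> H\<close> show ?thesis by blast
qed

lemma card_le_4_if_twins_regular_normal_subgroup:
  assumes uv: "twins D u v" "u \<noteq> v" and N: "H \<lhd> Aut D"
    and regular: "\<forall>x\<in>verts D. \<forall>y\<in>verts D. \<exists>!h\<in>H. h x = y"
  shows "card (verts D) \<le> 4"
proof -
  have H_auts: "H \<subseteq> auts D"
    using subgroup.subset[OF normal_imp_subgroup[OF N]] by (simp add: Aut_def)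
  show ?thesis
  proof (rule card_le_4_if_regular_normalized_by_transpose)
    show "u \<in> verts D" "v \<in> verts D"
      using twins_imp_verts[OF uv(1)] by auto
    show "bij_betw h (verts D) (verts D)" if "h \<in> H" for h
      using H_auts that auts_bij_betw by blast
    show "\<exists>h'\<in>H. \<forall>y\<in>verts D. h' (transpose u v y) = transpose u v (h y)" if "h \<in> H" for h
    proof -
      have "h y \<in> verts D" if "y \<in> verts D" for y
        using bij_betwE[OF auts_bij_betw] H_auts \<open>h \<in> H\<close> that by blast
      then show ?thesis
        using normal_subgroup_Aut_conjugate[OF N restrict_transpose_in_auts[OF uv(1)] that] by simp
    qed
  qed (use uv regular in auto)
qed

lemma right_mult_regular:
  assumes "group G" and x: "x \<in> carrier G" and y: "y \<in> carrier G"
  shows "\<exists>!h\<in>right_mult G ` carrier G. h x = y"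
proof
  interpret group G by (rule assms(1))
  let ?g = "inv\<^bsub>G\<^esub> x \<otimes>\<^bsub>G\<^esub> y"
  show "right_mult G ?g \<in> right_mult G ` carrier G \<and> right_mult G ?g x = y"
    using x y inv_solve_left[of ?g x y] by (simp add: right_mult_def)
  fix h assume "h \<in> right_mult G ` carrier G \<and> h x = y"
  then obtain g where "g \<in> carrier G" "h = right_mult G g" and "x \<otimes>\<^bsub>G\<^esub> g = y"
    using x by (auto simp: right_mult_def)
  moreover from this have "g = ?g"
    using x y inv_solve_left[of g x y] by simp
  ultimately show "h = right_mult G ?g" by simp
qed

lemma card_le_4_if_iso_normal_Cay:
  assumes "twins \<Gamma> u v" and "u \<noteq> v" and "normal_Cay G S" and iso: "\<Gamma> \<cong>\<^sub>d Cay G S"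
  shows "card (verts \<Gamma>) \<le> 4"
proof -
  obtain u' v' where twins: "twins (Cay G S) u' v'" and "u' \<noteq> v'"
    using digraph_iso_twins[OF iso assms(1,2)] .
  have "group G" and N: "right_mult G ` carrier G \<lhd> Aut (Cay G S)"
    using \<open>normal_Cay G S\<close> by (simp_all add: normal_Cay_def)
  have "\<forall>x\<in>verts (Cay G S). \<forall>y\<in>verts (Cay G S). \<exists>!h\<in>right_mult G ` carrier G. h x = y"
    using right_mult_regular[OF \<open>group G\<close>] by (simp add: Cay_def verts_def)
  from card_le_4_if_twins_regular_normal_subgroup[OF twins \<open>u' \<noteq> v'\<close> N this]
  show ?thesis
    using digraph_iso_card[OF iso] by simp
qed

lemma vertex_transitive_twins_le_4_obtains_K22:
  assumes dg: "is_digraph \<Gamma>" and fin: "finite (verts \<Gamma>)" and card: "card (verts \<Gamma>) \<le> 4"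
    and vt: "vertex_transitive \<Gamma>" and ll: "loopless \<Gamma>"
    and uv: "twins \<Gamma> u v" "u \<noteq> v" and "arcs \<Gamma> \<noteq> {}"
  obtains p q p' q' where "verts \<Gamma> = {p, q, p', q'}" and "card {p, q, p', q'} = 4"
    and "\<And>x y. (x, y) \<in> arcs \<Gamma> \<longleftrightarrow> x \<in> {p, p'} \<and> y \<in> {q, q'} \<or> x \<in> {q, q'} \<and> y \<in> {p, p'}"
proof -
  let ?V = "verts \<Gamma>" and ?A = "arcs \<Gamma>"
  obtain p q where pq: "(p, q) \<in> ?A"
    using \<open>?A \<noteq> {}\<close> by auto
  have p: "p \<in> ?V" and q: "q \<in> ?V"
    using dg pq by (auto simp: is_digraph_def)
  obtain p' where "p' \<noteq> p" and pp': "twins \<Gamma> p p'"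
    using vertex_transitive_ex_twin[OF vt uv p] by blast
  obtain q' where "q' \<noteq> q" and qq': "twins \<Gamma> q q'"
    using vertex_transitive_ex_twin[OF vt uv q] by blast
  have p': "p' \<in> ?V" and q': "q' \<in> ?V"
    using twins_imp_verts[OF pp'] twins_imp_verts[OF qq'] by blast+
  have P_to_Q: "(x, y) \<in> ?A" if "x \<in> {p, p'}" "y \<in> {q, q'}" for x y
    using twins_arcs_between_classes[OF pp' qq' pq _ _ that] by simp
  have inside: "(x, y) \<notin> ?A" if "x \<in> {p, p'} \<and> y \<in> {p, p'} \<or> x \<in> {q, q'} \<and> y \<in> {q, q'}" for x y
    using twins_not_arc[OF ll pp'] twins_not_arc[OF ll twins_sym[OF pp']]
      twins_not_arc[OF ll qq'] twins_not_arc[OF ll twins_sym[OF qq']] ll that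
    by (auto simp: loopless_def)
  have "p \<noteq> q" "p \<noteq> q'" "p' \<noteq> q" "p' \<noteq> q'"
    using P_to_Q inside by blast+
  then have card4: "card {p, q, p', q'} = 4"
    using \<open>p' \<noteq> p\<close> \<open>q' \<noteq> q\<close> by auto
  then have V: "?V = {p, q, p', q'}"
    using card_seteq[OF fin _ ] p q p' q' card by (metis empty_subsetI insert_subset)
  obtain g where g: "g \<in> auts \<Gamma>" "g q = p"
    using vt p q by (auto simp: vertex_transitive_def)
  \<comment> \<open>\<open>p\<close>, like \<open>q\<close>, has an in-neighbour, and it can only lie in \<open>{q, q'}\<close>\<close>
  have "(g p, p) \<in> ?A" and "g p \<in> ?V"
    using auts_arc_iff[OF g(1) p q] pq g(2) bij_betwE[OF auts_bij_betw[OF g(1)]] p by auto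
  then have "g p \<in> {q, q'}"
    using inside V by auto
  then have Q_to_P: "(y, x) \<in> ?A" if "x \<in> {p, p'}" "y \<in> {q, q'}" for x y
    using twins_arcs_between_classes[OF qq' pp' \<open>(g p, p) \<in> ?A\<close> _ _ that(2,1)] by simp
  show ?thesis
  proof
    show "(x, y) \<in> ?A \<longleftrightarrow> x \<in> {p, p'} \<and> y \<in> {q, q'} \<or> x \<in> {q, q'} \<and> y \<in> {p, p'}" for x y
    proof
      assume "(x, y) \<in> ?A"
      moreover have "x \<in> {p, p', q, q'}" "y \<in> {p, p', q, q'}"
        using dg calculation V by (auto simp: is_digraph_def)
      ultimately show "x \<in> {p, p'} \<and> y \<in> {q, q'} \<or> x \<in> {q, q'} \<and> y \<in> {p, p'}"
        using inside by blast
    qed (use P_to_Q Q_to_P in blast)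
  qed (fact V card4)+
qed

lemma iso_C4_if_twins:
  assumes "is_digraph \<Gamma>" and "finite (verts \<Gamma>)" and "card (verts \<Gamma>) \<le> 4"
    and "vertex_transitive \<Gamma>" and "loopless \<Gamma>"
    and "twins \<Gamma> u v" "u \<noteq> v" and "arcs \<Gamma> \<noteq> {}"
  shows "\<Gamma> \<cong>\<^sub>d C4"
proof -
  obtain p q p' q' where V: "verts \<Gamma> = {p, q, p', q'}" and card4: "card {p, q, p', q'} = 4"
    and arcs: "\<And>x y. (x, y) \<in> arcs \<Gamma> \<longleftrightarrow> x \<in> {p, p'} \<and> y \<in> {q, q'} \<or> x \<in> {q, q'} \<and> y \<in> {p, p'}"
    using vertex_transitive_twins_le_4_obtains_K22[OF assms] by blast
  define h where "h x = (if x = p then 0 else if x = q then 1 else if x = p' then 2 else 3 :: nat)" for x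
  show ?thesis
    unfolding digraph_iso_def
  proof (intro exI conjI ballI)
    show "bij_betw h (verts \<Gamma>) (verts C4)"
      unfolding V using card4
      by (auto simp: bij_betw_def h_def C4_def verts_def card_insert_if split: if_splits)
  next
    fix x y assume "x \<in> verts \<Gamma>" "y \<in> verts \<Gamma>"
    then have "x \<in> {p, q, p', q'}" "y \<in> {p, q, p', q'}"
      by (simp_all add: V)
    then show "(x, y) \<in> arcs \<Gamma> \<longleftrightarrow> (h x, h y) \<in> arcs C4"
      unfolding arcs using card4
      by (auto simp: h_def C4_def arcs_def card_insert_if split: if_splits)
  qed
qed

theorem lemma5p2:
  fixes \<Gamma> :: "'a digraph"
  assumes "is_digraph \<Gamma>" and "finite (verts \<Gamma>)" and "R_thick \<Gamma>"
    and "vertex_transitive \<Gamma>" and "loopless \<Gamma>"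
  shows "((\<exists>(\<Sigma> :: 'a digraph) b. is_digraph \<Sigma> \<and> b \<ge> 2 \<and> \<Gamma> \<cong>\<^sub>d lexicographic_product \<Sigma> (empty_digraph b)))
    \<and> (\<forall>(G :: 'g monoid) S. normal_Cay G S \<and> \<Gamma> \<cong>\<^sub>d Cay G S \<longrightarrow> card (verts \<Gamma>) \<le> 4)
    \<and> (normal_circulant \<Gamma> \<and> arcs \<Gamma> \<noteq> {} \<longrightarrow> \<Gamma> \<cong>\<^sub>d C4)"
proof -
  obtain u v where uv: "twins \<Gamma> u v" "u \<noteq> v"
    using assms(3) by (rule R_thick_obtains_twins)
  have "\<exists>(\<Sigma> :: 'a digraph) b. is_digraph \<Sigma> \<and> b \<ge> 2 \<and> \<Gamma> \<cong>\<^sub>d lexicographic_product \<Sigma> (empty_digraph b)"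
    using vertex_transitive_twins_iso_lexicographic_product[OF assms(2,4) uv] .
  moreover have "\<forall>(G :: 'g monoid) S. normal_Cay G S \<and> \<Gamma> \<cong>\<^sub>d Cay G S \<longrightarrow> card (verts \<Gamma>) \<le> 4"
    using card_le_4_if_iso_normal_Cay[OF uv] by blast
  moreover have "normal_circulant \<Gamma> \<and> arcs \<Gamma> \<noteq> {} \<longrightarrow> \<Gamma> \<cong>\<^sub>d C4"
  proof (intro impI, elim conjE)
    assume "normal_circulant \<Gamma>" and "arcs \<Gamma> \<noteq> {}"
    obtain H where "H \<lhd> Aut \<Gamma>" and "\<forall>x\<in>verts \<Gamma>. \<forall>y\<in>verts \<Gamma>. \<exists>!h\<in>H. h x = y"
      using \<open>normal_circulant \<Gamma>\<close> by (auto simp: normal_circulant_def)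
    then have "card (verts \<Gamma>) \<le> 4"
      by (rule card_le_4_if_twins_regular_normal_subgroup[OF uv])
    then show "\<Gamma> \<cong>\<^sub>d C4"
      using iso_C4_if_twins[OF assms(1,2) _ assms(4,5) uv \<open>arcs \<Gamma> \<noteq> {}\<close>] by blast
  qed
  ultimately show ?thesis by (intro conjI)
qed

end
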